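(* Let $1\le r\le n$, let $\mathcal{A}$ be a family of $r$-element subsets of $[n]$, and let $m$ be defined on $\mathcal{A}$ by: $m(A)=n/r$ if $A$ is contained in some matching of $\lfloor n/r\rfloor$ sets from $\mathcal{A}$, and otherwise $m(A)$ is the size of the largest matching of sets from $\mathcal{A}$ containing $A$. Let $\sigma$ be a cyclic permutation of $[n]$ and let $\mathcal{A}^\sigma$ be the collection of sets in $\mathcal{A}$ that are intervals in $\sigma$. Then \[ \sum_{A\in\mathcal{A}^\sigma}\frac{1}{m(A)}\le r. \]
   Context: A matching is a collection of pairwise disjoint sets. A cyclic permutation $\sigma$ of $[n]$ is a cyclic ordering $a_1<a_2<\dots<a_n<a_1$ of the elements of $[n]$. A set is an interval in $\sigma$ if its elements are consecutive in this cyclic order. *)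

theory Defs
  imports Complex_Main
begin

definition matching :: "'a set set \<Rightarrow> bool" where
  "matching M \<longleftrightarrow> (\<forall>A\<in>M. \<forall>B\<in>M. A \<noteq> B \<longrightarrow> A \<inter> B = {})"

definition m_weight :: "nat \<Rightarrow> nat \<Rightarrow> nat set set \<Rightarrow> nat set \<Rightarrow> real" where
  "m_weight n r F A =
     (if \<exists>M. M \<subseteq> F \<and> matching M \<and> A \<in> M \<and> card M = n div r
      then real n / real r
      else real (Max {card M | M. M \<subseteq> F \<and> matching M \<and> A \<in> M}))"

text \<open>A cyclic permutation of [n] is represented by a list xs enumerating [n] in the cyclic
  order (xs!0 < xs!1 < ... < xs!(n-1) < xs!0).\<close>
definition cyc_interval :: "nat list \<Rightarrow> nat set \<Rightarrow> bool" where
  "cyc_interval xs S \<longleftrightarrow>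
     (\<exists>i < length xs. \<exists>k \<le> length xs. S = {xs ! ((i + j) mod length xs) | j. j < k})"

end

theory Submission
  imports Defs
begin

text \<open>Identify an interval of length \<open>r\<close> in \<open>\<sigma>\<close> with its starting position, let \<open>S\<close> be the
  set of starting positions of the intervals in \<open>\<A>\<close>, and let \<open>q = \<lfloor>n/r\<rfloor>\<close>. Take \<open>q r\<close>
  starting positions, sort them and split the sorted list by index modulo \<open>r\<close>: two positions in
  the same class are at least \<open>r\<close> apart in both directions around the cycle, so each class gives
  a matching of \<open>q\<close> intervals.

  If \<open>|S| \<ge> q r\<close>, choosing the \<open>q r\<close> positions inside \<open>S\<close> shows that every interval of
  \<open>\<A>\<^sup>\<sigma>\<close> lies in a matching of \<open>q\<close> sets from \<open>\<A>\<close>, so \<open>m(A) = n/r\<close> and the sum is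
  \<open>|S| r/n \<le> r\<close>. Otherwise extend \<open>S\<close> to \<open>q r\<close> positions; the \<open>r\<close> classes cover \<open>\<A>\<^sup>\<sigma>\<close>
  by matchings \<open>M \<subseteq> \<A>\<close> of at most \<open>q\<close> sets, and since \<open>m(A) \<ge> |M|\<close> for \<open>A \<in> M\<close>, each
  class contributes at most \<open>1\<close>.\<close>

lemma sum_UN_le:
  fixes g :: "'a \<Rightarrow> 'b::ordered_comm_monoid_add"
  assumes "finite I" "\<And>i. i \<in> I \<Longrightarrow> finite (M i)" "\<And>x. x \<in> (\<Union>i\<in>I. M i) \<Longrightarrow> 0 \<le> g x"
  shows "sum g (\<Union>i\<in>I. M i) \<le> (\<Sum>i\<in>I. sum g (M i))"
  using assms
proof (induction I rule: finite_induct)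
  case (insert i I)
  have "sum g (M i \<union> (\<Union>j\<in>I. M j)) = sum g (M i) + sum g ((\<Union>j\<in>I. M j) - M i)"
    using sum.union_disjoint[of "M i" "(\<Union>j\<in>I. M j) - M i" g] insert.prems insert.hyps(1) by auto
  also have "\<dots> \<le> sum g (M i) + sum g (\<Union>j\<in>I. M j)"
    using insert.prems insert.hyps(1) by (intro add_left_mono sum_mono2) auto
  also have "\<dots> \<le> sum g (M i) + (\<Sum>j\<in>I. sum g (M j))"
    using insert by (intro add_left_mono) auto
  finally show ?case
    using insert.hyps by simp
qed simp

lemma take_rotate_eq_take_drop:
  assumes "d + k \<le> length xs"
  shows "take k (rotate d xs) = take k (drop d xs)"
  using assms by (intro nth_equalityI) (auto simp: nth_rotate)

lemma sorted_less_nth_add_le: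
  fixes L :: "nat list"
  assumes "sorted_wrt (<) L" "a + d < length L"
  shows "L ! a + d \<le> L ! (a + d)"
  using assms(2)
proof (induction d)
  case (Suc d)
  have "L ! (a + d) < L ! (a + Suc d)"
    using sorted_wrt_nth_less[OF assms(1)] Suc.prems by simp
  with Suc show ?case by simp
qed simp

lemma sorted_list_of_set_nth_gaps:
  assumes "E \<subseteq> {..<n}" "p \<le> p'" "p' < card E"
  defines "L \<equiv> sorted_list_of_set E"
  shows "L ! p + (p' - p) \<le> L ! p'" and "L ! p' + (card E - (p' - p)) \<le> L ! p + n"
proof -
  have "finite E" using assms(1) finite_subset by blast
  then have sorted: "sorted_wrt (<) L" and len: "length L = card E" and set: "set L = E"
    by (simp_all add: L_def)
  show "L ! p + (p' - p) \<le> L ! p'"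
    using sorted_less_nth_add_le[OF sorted, of p "p' - p"] assms(2,3) len by simp
  have "L ! p' + (card E - 1 - p') \<le> L ! (card E - 1)"
    using sorted_less_nth_add_le[OF sorted, of p' "card E - 1 - p'"] assms(3) len by simp
  moreover have "L ! 0 + p \<le> L ! p"
    using sorted_less_nth_add_le[OF sorted, of 0 p] assms(2,3) len by simp
  moreover have "L ! (card E - 1) < n"
    using nth_mem[of "card E - 1" L] assms(1,3) len set by auto
  ultimately show "L ! p' + (card E - (p' - p)) \<le> L ! p + n"
    using assms(2,3) by linarith
qed

lemma mod_eq_diff_bounds:
  fixes p p' q r :: nat
  assumes "p < p'" "p' < q * r" "p mod r = p' mod r"
  shows "r \<le> p' - p" and "r \<le> q * r - (p' - p)"
proof -
  have "r dvd p' - p"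
    using assms(1,3) mod_eq_dvd_iff_nat[of p p' r] by simp
  then show "r \<le> p' - p"
    using assms(1) by (simp add: dvd_imp_le)
  have "p' div r < q"
    using assms(2) by (simp add: less_mult_imp_div_less)
  then have "p' div r * r + r \<le> q * r"
    by (metis add.commute mult_Suc mult_le_mono1 Suc_leI)
  moreover have "p = p div r * r + p' mod r" "p' = p' div r * r + p' mod r"
    using div_mult_mod_eq[of p r] div_mult_mod_eq[of p' r] assms(3) by simp_all
  ultimately show "r \<le> q * r - (p' - p)"
    by linarith
qed

lemma card_residue_class:
  fixes r q c :: nat
  assumes "c < r"
  shows "card {p. p < q * r \<and> p mod r = c} = q"
proof -
  have "{p. p < q * r \<and> p mod r = c} = (\<lambda>k. c + k * r) ` {..<q}"
  proof (intro equalityI subsetI)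
    fix p assume "p \<in> {p. p < q * r \<and> p mod r = c}"
    then have "p = c + p div r * r" "p div r < q"
      by (auto simp: less_mult_imp_div_less)
    then show "p \<in> (\<lambda>k. c + k * r) ` {..<q}" by blast
  next
    fix p assume "p \<in> (\<lambda>k. c + k * r) ` {..<q}"
    then obtain k where "k < q" "p = c + k * r" by blast
    moreover have "c + k * r < q * r" if "k < q"
    proof -
      have "Suc k * r \<le> q * r"
        using that by (intro mult_le_mono1) simp
      then show ?thesis
        using assms by simp
    qed
    ultimately show "p \<in> {p. p < q * r \<and> p mod r = c}"
      using assms by simp
  qed
  moreover have "inj_on (\<lambda>k. c + k * r) {..<q}"
    using assms by (intro inj_onI) simp
  ultimately show ?thesis
    by (simp add: card_image)
qed

definition arc :: "nat list \<Rightarrow> nat \<Rightarrow> nat \<Rightarrow> nat set" where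
  "arc xs i k = {xs ! ((i + j) mod length xs) | j. j < k}"

lemma cyc_interval_iff_arc:
  "cyc_interval xs S \<longleftrightarrow> (\<exists>i < length xs. \<exists>k \<le> length xs. S = arc xs i k)"
  by (simp add: cyc_interval_def arc_def)

lemma arc_eq_set_take_rotate:
  assumes "k \<le> length xs"
  shows "arc xs i k = set (take k (rotate i xs))"
  using assms by (force simp: arc_def set_conv_nth nth_rotate)

lemma card_arc:
  assumes "distinct xs" "k \<le> length xs"
  shows "card (arc xs i k) = k"
  using assms by (simp add: arc_eq_set_take_rotate distinct_card)

lemma arc_disjoint:
  assumes "distinct xs" "x + k \<le> y" "y + k \<le> x + length xs"
  shows "arc xs x k \<inter> arc xs y k = {}"
proof -
  let ?ys = "rotate x xs"
  have "take k (rotate y xs) = take k (drop (y - x) ?ys)"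
    using assms(2,3) take_rotate_eq_take_drop[of "y - x" k ?ys] by (simp add: rotate_rotate)
  moreover have "set (take k ?ys) \<inter> set (drop (y - x) ?ys) = {}"
    using assms by (intro set_take_disj_set_drop_if_distinct) auto
  ultimately show ?thesis
    using assms by (auto simp: arc_eq_set_take_rotate dest: in_set_takeD)
qed

definition residue_arcs :: "nat list \<Rightarrow> nat \<Rightarrow> nat set \<Rightarrow> nat \<Rightarrow> nat set set" where
  "residue_arcs xs r E c =
     (\<lambda>p. arc xs (sorted_list_of_set E ! p) r) ` {p. p < card E \<and> p mod r = c}"

lemma residue_arcs_disjoint:
  assumes "distinct xs" "E \<subseteq> {..<length xs}" "card E = q * r"
    and "p < card E" "p' < card E" "p mod r = p' mod r" "p \<noteq> p'"
  defines "L \<equiv> sorted_list_of_set E"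
  shows "arc xs (L ! p) r \<inter> arc xs (L ! p') r = {}"
proof -
  have ordered: "arc xs (L ! p) r \<inter> arc xs (L ! p') r = {}"
    if "p < p'" "p' < card E" "p mod r = p' mod r" for p p'
  proof (rule arc_disjoint[OF assms(1)])
    have "r \<le> p' - p" "r \<le> card E - (p' - p)"
      using mod_eq_diff_bounds[of p p' q r] that assms(3) by simp_all
    then show "L ! p + r \<le> L ! p'" "L ! p' + r \<le> L ! p + length xs"
      using sorted_list_of_set_nth_gaps[OF assms(2), of p p'] that unfolding L_def by simp_all
  qed
  show ?thesis
  proof (cases "p < p'")
    case True
    then show ?thesis
      using ordered assms(5,6) by simp
  next
    case False
    then have "p' < p"
      using assms(7) by simp
    then show ?thesis
      using ordered[of p' p] assms(4,6) by (simp add: Int_commute)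
  qed
qed

lemma matching_residue_arcs:
  assumes "distinct xs" "E \<subseteq> {..<length xs}" "card E = q * r"
  shows "matching (residue_arcs xs r E c)"
  unfolding matching_def residue_arcs_def
  using residue_arcs_disjoint[OF assms] by fastforce

lemma card_residue_arcs:
  assumes "distinct xs" "E \<subseteq> {..<length xs}" "card E = q * r" "c < r"
  shows "card (residue_arcs xs r E c) = q"
proof -
  let ?arc = "\<lambda>p. arc xs (sorted_list_of_set E ! p) r"
  have "inj_on ?arc {p. p < card E \<and> p mod r = c}"
  proof (rule inj_onI, rule ccontr)
    fix p p' assume p: "p \<in> {p. p < card E \<and> p mod r = c}" "p' \<in> {p. p < card E \<and> p mod r = c}"
      and "?arc p = ?arc p'" and "p \<noteq> p'"
    then have "?arc p = {}"
      using residue_arcs_disjoint[OF assms(1-3), of p p'] by auto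
    moreover have "r \<le> length xs"
      using p assms(3) card_mono[OF _ assms(2)] by (cases q) auto
    ultimately show False
      using card_arc[OF assms(1) \<open>r \<le> length xs\<close>, of "sorted_list_of_set E ! p"] assms(4) by simp
  qed
  then show ?thesis
    using card_residue_class[OF assms(4), of q] assms(3)
    by (simp add: residue_arcs_def card_image)
qed

lemma arc_in_residue_arcs:
  assumes "finite E" "x \<in> E" "0 < r"
  shows "\<exists>c < r. arc xs x r \<in> residue_arcs xs r E c"
proof -
  obtain p where "p < card E" "sorted_list_of_set E ! p = x"
    using assms(1,2) by (metis in_set_conv_nth length_sorted_list_of_set set_sorted_list_of_set)
  then show ?thesis
    using assms(3) unfolding residue_arcs_def by (intro exI[of _ "p mod r"]) auto
qed

lemma m_weight_nonneg: "0 \<le> m_weight n r F A"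
  by (simp add: m_weight_def)

lemma card_le_m_weight:
  assumes "finite F" "M \<subseteq> F" "matching M" "A \<in> M" "card M \<le> n div r"
  shows "real (card M) \<le> m_weight n r F A"
proof (cases "\<exists>M. M \<subseteq> F \<and> matching M \<and> A \<in> M \<and> card M = n div r")
  case True
  then have "m_weight n r F A = real n / real r"
    by (simp add: m_weight_def)
  with assms(5) show ?thesis
    using of_nat_div_le_of_nat[of n r] by (metis of_nat_le_iff order.trans)
next
  case False
  let ?C = "{card M | M. M \<subseteq> F \<and> matching M \<and> A \<in> M}"
  have "finite ?C"
    using assms(1) by (auto intro: finite_subset[of _ "card ` Pow F"])
  then have "card M \<le> Max ?C"
    using assms(2-4) by (intro Max_ge) auto
  moreover have "m_weight n r F A = real (Max ?C)"
    unfolding m_weight_def by (rule if_not_P[OF False])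
  ultimately show ?thesis
    by simp
qed

lemma sum_inverse_m_weight_le_one:
  assumes "finite F" "M \<subseteq> F" "matching M" "card M \<le> n div r"
  shows "(\<Sum>A\<in>M. 1 / m_weight n r F A) \<le> 1"
proof (cases "M = {}")
  case False
  then have pos: "0 < card M"
    using assms(1,2) by (simp add: card_gt_0_iff finite_subset)
  have "(\<Sum>A\<in>M. 1 / m_weight n r F A) \<le> (\<Sum>A\<in>M. 1 / real (card M))"
    using card_le_m_weight[OF assms(1-3) _ assms(4)] pos by (intro sum_mono frac_le) auto
  also have "\<dots> = 1"
    using pos by simp
  finally show ?thesis .
qed simp

lemma interval_family_eq_arcs:
  assumes "distinct xs" "r \<le> length xs" "\<forall>A\<in>F. card A = r"
  shows "{A\<in>F. cyc_interval xs A} = (\<lambda>x. arc xs x r) ` {x. x < length xs \<and> arc xs x r \<in> F}"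
proof (intro equalityI subsetI)
  fix A assume A: "A \<in> {A\<in>F. cyc_interval xs A}"
  then obtain i k where "i < length xs" "k \<le> length xs" "A = arc xs i k"
    by (auto simp: cyc_interval_iff_arc)
  moreover have "k = r"
    using A assms(1,3) card_arc[OF assms(1) \<open>k \<le> length xs\<close>, of i] \<open>A = arc xs i k\<close> by simp
  ultimately show "A \<in> (\<lambda>x. arc xs x r) ` {x. x < length xs \<and> arc xs x r \<in> F}"
    using A by auto
qed (use assms(2) in \<open>auto simp: cyc_interval_iff_arc\<close>)

lemma sum_inverse_m_weight_arcs_le_if_few:
  assumes "distinct xs" "finite F" "0 < r" "S \<subseteq> {..<length xs}" "(\<lambda>x. arc xs x r) ` S \<subseteq> F"
    and "card S \<le> length xs div r * r"
  shows "(\<Sum>A\<in>(\<lambda>x. arc xs x r) ` S. 1 / m_weight (length xs) r F A) \<le> r"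
proof -
  let ?n = "length xs" and ?q = "length xs div r"
  let ?g = "\<lambda>A. 1 / m_weight ?n r F A"
  have "finite S"
    using assms(4) by (rule finite_subset) simp
  have "?q * r - card S \<le> card ({..<?n} - S)"
    using card_Diff_subset[OF \<open>finite S\<close> assms(4)] diff_le_mono[of "?q * r" ?n "card S"] by simp
  then obtain T where T: "T \<subseteq> {..<?n} - S" "card T = ?q * r - card S"
    by (metis obtain_subset_with_card_n)
  define E where "E = S \<union> T"
  have "finite T"
    using T(1) by (rule finite_subset) simp
  have "S \<inter> T = {}"
    using T(1) by blast
  then have E: "E \<subseteq> {..<?n}" "finite E" "card E = ?q * r"
    using T assms(4,6) \<open>finite S\<close> \<open>finite T\<close> by (auto simp: E_def card_Un_disjoint)
  let ?M = "\<lambda>c. residue_arcs xs r E c \<inter> F"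
  have "(\<lambda>x. arc xs x r) ` S \<subseteq> (\<Union>c\<in>{..<r}. ?M c)"
  proof (rule image_subsetI)
    fix x assume "x \<in> S"
    then obtain c where "c < r" "arc xs x r \<in> residue_arcs xs r E c"
      using arc_in_residue_arcs[OF E(2) _ assms(3), of x xs] by (auto simp: E_def)
    then show "arc xs x r \<in> (\<Union>c\<in>{..<r}. ?M c)"
      using assms(5) \<open>x \<in> S\<close> by blast
  qed
  then have "(\<Sum>A\<in>(\<lambda>x. arc xs x r) ` S. ?g A) \<le> (\<Sum>A\<in>(\<Union>c\<in>{..<r}. ?M c). ?g A)"
    using finite_subset[OF _ assms(2), of "\<Union>c\<in>{..<r}. ?M c"] m_weight_nonneg
    by (intro sum_mono2) auto
  also have "\<dots> \<le> (\<Sum>c<r. \<Sum>A\<in>?M c. ?g A)"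
    using assms(2) m_weight_nonneg by (intro sum_UN_le) auto
  also have "\<dots> \<le> (\<Sum>c<r. 1)"
  proof (intro sum_mono sum_inverse_m_weight_le_one[OF assms(2)])
    fix c assume "c \<in> {..<r}"
    have "card (?M c) \<le> card (residue_arcs xs r E c)"
      using E(2) by (intro card_mono) (auto simp: residue_arcs_def)
    then show "card (?M c) \<le> ?n div r"
      using card_residue_arcs[OF assms(1) E(1,3)] \<open>c \<in> {..<r}\<close> by simp
    show "matching (?M c)"
      using matching_residue_arcs[OF assms(1) E(1,3), of c] by (auto simp: matching_def)
  qed auto
  finally show ?thesis
    by simp
qed

lemma m_weight_arc_if_many:
  assumes "distinct xs" "0 < r" "r \<le> length xs" "S \<subseteq> {..<length xs}"
    and "(\<lambda>x. arc xs x r) ` S \<subseteq> F" "length xs div r * r \<le> card S" "x \<in> S"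
  shows "m_weight (length xs) r F (arc xs x r) = real (length xs) / real r"
proof -
  let ?n = "length xs" and ?q = "length xs div r"
  have "0 < ?q * r"
    using assms(2,3) by (simp add: div_greater_zero_iff)
  have "?q * r - 1 \<le> card (S - {x})"
    using assms(6,7) by simp
  then obtain T where T: "T \<subseteq> S - {x}" "card T = ?q * r - 1"
    by (metis obtain_subset_with_card_n)
  define E where "E = insert x T"
  have "finite T"
    using T(1) assms(4) by (meson Diff_subset finite_lessThan finite_subset subset_trans)
  moreover have "x \<notin> T"
    using T(1) by blast
  ultimately have E: "E \<subseteq> S" "E \<subseteq> {..<?n}" "finite E" "card E = ?q * r"
    using T assms(4,7) \<open>0 < ?q * r\<close> by (auto simp: E_def)
  obtain c where "c < r" and x: "arc xs x r \<in> residue_arcs xs r E c"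
    using arc_in_residue_arcs[OF E(3) _ assms(2), of x] by (auto simp: E_def)
  have "sorted_list_of_set E ! p \<in> S" if "p < card E" for p
    using E(1,3) nth_mem[of p "sorted_list_of_set E"] that by auto
  then have "residue_arcs xs r E c \<subseteq> F"
    using assms(5) by (auto simp: residue_arcs_def)
  with x matching_residue_arcs[OF assms(1) E(2,4)] card_residue_arcs[OF assms(1) E(2,4) \<open>c < r\<close>]
  have "\<exists>M. M \<subseteq> F \<and> matching M \<and> arc xs x r \<in> M \<and> card M = ?q"
    by blast
  then show ?thesis
    by (simp add: m_weight_def)
qed

lemma sum_inverse_m_weight_arcs_le_if_many:
  assumes "distinct xs" "0 < r" "r \<le> length xs" "S \<subseteq> {..<length xs}"
    and "(\<lambda>x. arc xs x r) ` S \<subseteq> F" "length xs div r * r \<le> card S"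
  shows "(\<Sum>A\<in>(\<lambda>x. arc xs x r) ` S. 1 / m_weight (length xs) r F A) \<le> r"
proof -
  let ?n = "length xs"
  have "(\<Sum>A\<in>(\<lambda>x. arc xs x r) ` S. 1 / m_weight ?n r F A)
      \<le> (\<Sum>x\<in>S. 1 / m_weight ?n r F (arc xs x r))"
    using sum_image_le[of S "\<lambda>A. 1 / m_weight ?n r F A" "\<lambda>x. arc xs x r"] m_weight_nonneg
      finite_subset[OF assms(4)] by (simp add: o_def)
  also have "\<dots> = real (card S) * (real r / real ?n)"
    using m_weight_arc_if_many[OF assms] by simp
  also have "\<dots> \<le> real ?n * (real r / real ?n)"
    using card_mono[OF _ assms(4)] by (intro mult_right_mono) auto
  also have "\<dots> \<le> real r"
    by simp
  finally show ?thesis .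
qed

theorem lemma6:
  fixes n r :: nat and F :: "nat set set" and xs :: "nat list"
  assumes "1 \<le> r" and "r \<le> n"
    and "\<forall>A\<in>F. A \<subseteq> {1..n} \<and> card A = r"
    and "distinct xs" and "set xs = {1..n}"
  shows "(\<Sum>A\<in>{A\<in>F. cyc_interval xs A}. 1 / m_weight n r F A) \<le> real r"
proof -
  have n: "length xs = n"
    using distinct_card[OF assms(4)] assms(5) by simp
  have "finite F"
    using assms(3) finite_subset[of F "Pow {1..n}"] by auto
  define S where "S = {x. x < n \<and> arc xs x r \<in> F}"
  have S: "S \<subseteq> {..<length xs}" "(\<lambda>x. arc xs x r) ` S \<subseteq> F"
    using n by (auto simp: S_def)
  have "{A\<in>F. cyc_interval xs A} = (\<lambda>x. arc xs x r) ` S"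
    using interval_family_eq_arcs[OF assms(4)] assms(2,3) n by (simp add: S_def)
  moreover have "(\<Sum>A\<in>(\<lambda>x. arc xs x r) ` S. 1 / m_weight n r F A) \<le> r"
    using nat_le_linear[of "card S" "n div r * r"] assms(1,2) n
      sum_inverse_m_weight_arcs_le_if_few[OF assms(4) \<open>finite F\<close> _ S]
      sum_inverse_m_weight_arcs_le_if_many[OF assms(4) _ _ S]
    by auto
  ultimately show ?thesis
    by simp
qed

end
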